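(* Let $\mathcal{S}_n(2413,3142)$ denote the set of permutations of $\{1,\dots,n\}$ (in one-line notation) avoiding both patterns $2413$ and $3142$, and let $S(x)=\sum_{n\ge 0}\lvert\mathcal{S}_n(2413,3142)\rvert x^n$, with the convention that the $n=0$ coefficient is $1$. For $1\le \ell\le n$ let $\mathcal{S}_n^{\ell\mapsto 1}(2413,3142)=\{\sigma\in \mathcal{S}_n(2413,3142):\sigma(\ell)=1\}$. Then the generating function \[ g(x,u)=\sum_{n=1}^\infty\sum_{\ell=1}^n \lvert\mathcal{S}_n^{\ell\mapsto 1}(2413,3142)\rvert\, u^{\ell}x^n \] satisfies \[ g(x,u)=\frac{xu\,S(x)S(xu)}{S(x)+S(xu)-S(x)S(xu)}. \]
   Context: A permutation $\sigma$ avoids a pattern $p$ if no subsequence of its one-line notation is order-isomorphic to $p$. Permutations avoiding $2413$ and $3142$ are called separable permutations. *)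

theory Defs
  imports "HOL-Computational_Algebra.Formal_Power_Series" "HOL-Combinatorics.Multiset_Permutations"
begin

definition contains_pattern :: "nat list \<Rightarrow> nat list \<Rightarrow> bool" where
  "contains_pattern xs p \<longleftrightarrow>
     (\<exists>js. length js = length p \<and> sorted_wrt (<) js \<and> (\<forall>j\<in>set js. j < length xs) \<and>
        (\<forall>a<length p. \<forall>b<length p. xs ! (js ! a) < xs ! (js ! b) \<longleftrightarrow> p ! a < p ! b))"

definition avoids :: "nat list \<Rightarrow> nat list \<Rightarrow> bool" where
  "avoids xs p \<longleftrightarrow> \<not> contains_pattern xs p"

definition sep_perms :: "nat \<Rightarrow> nat list set" where
  "sep_perms n = {xs \<in> permutations_of_set {1..n}. avoids xs [2,4,1,3] \<and> avoids xs [3,1,4,2]}"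

definition sep_perms_at :: "nat \<Rightarrow> nat \<Rightarrow> nat list set" where
  "sep_perms_at n l = {xs \<in> sep_perms n. xs ! (l - 1) = 1}"

text \<open>Bivariate series are elements of rat fps fps: outer variable x, inner variable u.\<close>

definition Sx :: "rat fps fps" where
  "Sx = Abs_fps (\<lambda>n. fps_const (if n = 0 then 1 else of_nat (card (sep_perms n))))"

definition Sxu :: "rat fps fps" where
  "Sxu = Abs_fps (\<lambda>n. fps_const (if n = 0 then 1 else of_nat (card (sep_perms n))) * fps_X ^ n)"

definition g_sep :: "rat fps fps" where
  "g_sep = Abs_fps (\<lambda>n. Abs_fps (\<lambda>l. if 1 \<le> l \<and> l \<le> n then of_nat (card (sep_perms_at n l)) else 0))"

end

(*
  Every separable permutation of length at least 2 is a direct sum or a skew sum, but not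
  both.  Splitting off the first component of a direct sum, which contains the entry 1 and is
  sum-indecomposable, gives g = G_sum(x,u) S(x); splitting off the last component of a skew
  sum, which contains 1 and is skew-indecomposable, gives g = G_skew(x,u) S(xu), because the
  preceding block shifts the position of 1 by its length.  Every separable permutation other
  than 1 is indecomposable in exactly one of the two senses, so G_sum + G_skew = g + xu.
  Eliminating G_sum and G_skew yields g (S(x) + S(xu) - S(x) S(xu)) = xu S(x) S(xu).
  Reversal exchanges 2413 with 3142 and skew sums with direct sums, so all statements
  about skew sums are reduced to direct sums.
*)

theory Submission
  imports Defs
begin

unbundle fps_syntax

section \<open>Pattern containment\<close>

lemma contains_pattern_length_le:
  assumes "contains_pattern xs p"
  shows "length p \<le> length xs"
proof -
  obtain js where js: "length js = length p" "sorted_wrt (<) js" "\<forall>j\<in>set js. j < length xs"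
    using assms unfolding contains_pattern_def by blast
  have "length js = card (set js)"
    using js(2) by (simp add: distinct_card strict_sorted_iff)
  also have "\<dots> \<le> card {..<length xs}"
    using js(3) by (intro card_mono) auto
  finally show ?thesis using js(1) by simp
qed

lemma contains_pattern_embed:
  assumes "contains_pattern xs p" and "strict_mono f"
    and "\<And>i. i < length xs \<Longrightarrow> f i < length ys \<and> ys ! f i = xs ! i"
  shows "contains_pattern ys p"
proof -
  obtain js where js: "length js = length p" "sorted_wrt (<) js" "\<forall>j\<in>set js. j < length xs"
      "\<forall>a<length p. \<forall>b<length p. xs ! (js ! a) < xs ! (js ! b) \<longleftrightarrow> p ! a < p ! b"
    using assms(1) unfolding contains_pattern_def by blast
  have "sorted_wrt (<) (map f js)"
    using js(2) by (rule sorted_wrt_map_mono) (rule strict_monoD[OF assms(2)])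
  moreover have "\<forall>j\<in>set (map f js). j < length ys"
    using js(3) assms(3) by auto
  moreover have "ys ! (map f js ! a) = xs ! (js ! a)" if "a < length p" for a
    using that js(1,3) assms(3) by simp
  ultimately show ?thesis
    unfolding contains_pattern_def using js(1,4) by (intro exI[of _ "map f js"]) simp
qed

lemma contains_pattern_appendI1: "contains_pattern xs p \<Longrightarrow> contains_pattern (xs @ ys) p"
  by (erule contains_pattern_embed[where f = id]) (auto simp: strict_mono_def nth_append)

lemma contains_pattern_appendI2: "contains_pattern ys p \<Longrightarrow> contains_pattern (xs @ ys) p"
  by (erule contains_pattern_embed[where f = "(+) (length xs)"]) (auto simp: strict_mono_def)

lemma contains_pattern_insertI:
  assumes "contains_pattern (xs @ zs) p"
  shows "contains_pattern (xs @ y # zs) p"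
proof (rule contains_pattern_embed[OF assms])
  let ?f = "\<lambda>i. if i < length xs then i else Suc i"
  show "strict_mono ?f"
    by (auto simp: strict_mono_def)
  show "?f i < length (xs @ y # zs) \<and> (xs @ y # zs) ! ?f i = (xs @ zs) ! i"
    if "i < length (xs @ zs)" for i
    using that by (cases "i < length xs") (simp_all add: nth_append)
qed

lemma contains_pattern_map_strict_mono:
  assumes "strict_mono f"
  shows "contains_pattern (map f xs) p \<longleftrightarrow> contains_pattern xs p"
  unfolding contains_pattern_def length_map
  by (intro ex_cong1 conj_cong refl) (auto simp: strict_mono_less[OF assms])

lemma contains_pattern_revI:
  assumes "contains_pattern xs p"
  shows "contains_pattern (rev xs) (rev p)"
proof -
  obtain js where js: "length js = length p" "sorted_wrt (<) js" "\<forall>j\<in>set js. j < length xs"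
      "\<forall>a<length p. \<forall>b<length p. xs ! (js ! a) < xs ! (js ! b) \<longleftrightarrow> p ! a < p ! b"
    using assms unfolding contains_pattern_def by blast
  let ?n = "length xs" and ?m = "length p"
  define js' where "js' = rev (map (\<lambda>j. ?n - Suc j) js)"
  have js'_nth: "rev xs ! (js' ! a) = xs ! (js ! (?m - Suc a))" if "a < ?m" for a
  proof -
    have "js ! (?m - Suc a) < ?n"
      using that js(1,3) by simp
    then show ?thesis
      using that js(1) by (simp add: js'_def rev_nth)
  qed
  have "sorted_wrt (<) js'"
    unfolding js'_def sorted_wrt_rev using js(2) by (rule sorted_wrt_map_mono) (use js(3) in auto)
  moreover have "\<forall>j\<in>set js'. j < length (rev xs)"
    using js(3) by (auto simp: js'_def)
  moreover have "\<forall>a<?m. \<forall>b<?m. rev xs ! (js' ! a) < rev xs ! (js' ! b) \<longleftrightarrow> rev p ! a < rev p ! b"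
    using js(4) by (simp add: js'_nth rev_nth)
  ultimately show ?thesis
    unfolding contains_pattern_def using js(1) by (intro exI[of _ js']) (simp add: js'_def)
qed

lemma contains_pattern_rev: "contains_pattern (rev xs) p \<longleftrightarrow> contains_pattern xs (rev p)"
  using contains_pattern_revI[of xs "rev p"] contains_pattern_revI[of "rev xs" p] by auto

lemma contains_pattern_2413I:
  assumes "i1 < i2" "i2 < i3" "i3 < i4" "i4 < length xs"
    and "xs ! i3 < xs ! i1" "xs ! i1 < xs ! i4" "xs ! i4 < xs ! i2"
  shows "contains_pattern xs [2,4,1,3]"
  unfolding contains_pattern_def using assms
  by (intro exI[of _ "[i1,i2,i3,i4]"]) (auto simp: less_Suc_eq numeral_eq_Suc)

lemma sorted_wrt_less_split_index:
  fixes js :: "'a::linorder list"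
  assumes "sorted_wrt (<) js"
  obtains c where "c \<le> length js" "\<And>a. a < c \<Longrightarrow> js ! a < L"
    "\<And>b. c \<le> b \<Longrightarrow> b < length js \<Longrightarrow> L \<le> js ! b"
proof
  let ?P = "\<lambda>a. a = length js \<or> L \<le> js ! a"
  show "(LEAST a. ?P a) \<le> length js"
    by (rule Least_le) simp
  show "js ! a < L" if "a < (LEAST a. ?P a)" for a
    using not_less_Least[OF that] \<open>(LEAST a. ?P a) \<le> length js\<close> that by auto
  show "L \<le> js ! b" if "(LEAST a. ?P a) \<le> b" "b < length js" for b
  proof -
    have "?P (LEAST a. ?P a)"
      by (rule LeastI[of _ "length js"]) simp
    moreover have "js ! (LEAST a. ?P a) \<le> js ! b"
      using that assms
      by (cases "(LEAST a. ?P a) = b") (auto simp: sorted_wrt_iff_nth_less less_imp_le)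
    ultimately show ?thesis
      using that by auto
  qed
qed

lemma contains_pattern_append_cases:
  assumes "contains_pattern (xs @ ys) p"
  obtains "contains_pattern xs p" | "contains_pattern ys p"
    | c where "0 < c" "c < length p"
      "\<And>a b. a < c \<Longrightarrow> c \<le> b \<Longrightarrow> b < length p \<Longrightarrow>
        \<exists>x\<in>set xs. \<exists>y\<in>set ys. x < y \<longleftrightarrow> p ! a < p ! b"
proof -
  obtain js where js: "length js = length p" "sorted_wrt (<) js" "\<forall>j\<in>set js. j < length (xs @ ys)"
      "\<forall>a<length p. \<forall>b<length p. (xs @ ys) ! (js ! a) < (xs @ ys) ! (js ! b) \<longleftrightarrow> p ! a < p ! b"
    using assms unfolding contains_pattern_def by blast
  let ?L = "length xs" and ?m = "length p"
  have js_bound: "js ! a < ?L + length ys" if "a < ?m" for a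
    using that js(1,3) by auto
  obtain c where "c \<le> ?m" and left: "\<And>a. a < c \<Longrightarrow> js ! a < ?L"
    and right: "\<And>b. c \<le> b \<Longrightarrow> b < ?m \<Longrightarrow> ?L \<le> js ! b"
    using sorted_wrt_less_split_index[OF js(2), of ?L] js(1) by metis
  consider "c = ?m" | "c = 0" | "0 < c" "c < ?m"
    using \<open>c \<le> ?m\<close> by linarith
  then show thesis
  proof cases
    case 1
    then have "contains_pattern xs p"
      unfolding contains_pattern_def using js left
      by (intro exI[of _ js]) (auto simp: nth_append in_set_conv_nth)
    then show thesis by (rule that(1))
  next
    case 2
    let ?js = "map (\<lambda>j. j - ?L) js"
    have all_right: "\<forall>j\<in>set js. ?L \<le> j"
      using right 2 js(1) by (auto simp: in_set_conv_nth)
    have "sorted_wrt (<) ?js"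
      using js(2) by (rule sorted_wrt_map_mono) (simp add: all_right diff_less_mono)
    moreover have "\<forall>j\<in>set ?js. j < length ys"
      using js(3) all_right by fastforce
    moreover have "\<forall>a<?m. \<forall>b<?m. ys ! (?js ! a) < ys ! (?js ! b) \<longleftrightarrow> p ! a < p ! b"
      using js(1,4) right 2 by (simp add: nth_append not_less[symmetric])
    ultimately have "contains_pattern ys p"
      unfolding contains_pattern_def using js(1) by (intro exI[of _ ?js]) simp
    then show thesis by (rule that(2))
  next
    case 3
    have "\<exists>x\<in>set xs. \<exists>y\<in>set ys. x < y \<longleftrightarrow> p ! a < p ! b"
      if "a < c" "c \<le> b" "b < ?m" for a b
    proof (intro bexI)
      show "xs ! (js ! a) < ys ! (js ! b - ?L) \<longleftrightarrow> p ! a < p ! b"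
        using js(4)[rule_format, of a b] left[OF that(1)] right[OF that(2,3)] that
        by (simp add: nth_append)
      show "xs ! (js ! a) \<in> set xs"
        using left[OF that(1)] by simp
      show "ys ! (js ! b - ?L) \<in> set ys"
        using right[OF that(2,3)] js_bound[OF that(3)] by simp
    qed
    then show thesis
      using 3 by (intro that(3))
  qed
qed

lemma avoids_append_less:
  assumes "avoids xs p" "avoids ys p" and less: "\<forall>x\<in>set xs. \<forall>y\<in>set ys. x < y"
    and indecomposable: "\<And>c. 0 < c \<Longrightarrow> c < length p \<Longrightarrow> \<exists>a<c. \<exists>b<length p. c \<le> b \<and> p ! b < p ! a"
  shows "avoids (xs @ ys) p"
  unfolding avoids_def
proof
  assume "contains_pattern (xs @ ys) p"
  then show False
  proof (cases rule: contains_pattern_append_cases)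
    case (3 c)
    obtain a b where ab: "a < c" "c \<le> b" "b < length p" and desc: "p ! b < p ! a"
      using indecomposable[OF 3(1,2)] by blast
    obtain x y where "x \<in> set xs" "y \<in> set ys" "x < y \<longleftrightarrow> p ! a < p ! b"
      using 3(3)[OF ab] by blast
    with less desc show False
      by auto
  qed (use assms(1,2) in \<open>simp_all add: avoids_def\<close>)
qed

lemma avoids_appendD:
  assumes "avoids (xs @ ys) p"
  shows "avoids xs p" "avoids ys p"
  using assms contains_pattern_appendI1[of xs p ys] contains_pattern_appendI2[of ys p xs]
  unfolding avoids_def by auto

lemma avoids_if_length_less: "length xs < length p \<Longrightarrow> avoids xs p"
  using contains_pattern_length_le unfolding avoids_def by fastforce

lemma sep_patterns_sum_indecomposable:
  fixes p :: "nat list"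
  assumes "p = [2,4,1,3] \<or> p = [3,1,4,2]" "0 < c" "c < length p"
  shows "\<exists>a<c. \<exists>b<length p. c \<le> b \<and> p ! b < p ! a"
proof -
  have "c = 1 \<or> c = 2 \<or> c = 3"
    using assms by auto
  then show ?thesis
    using assms(1) by (auto simp: Ex_less_Suc2 numeral_eq_Suc)
qed

section \<open>Separable permutations and direct sums\<close>

lemma sep_perms_iff:
  "xs \<in> sep_perms n \<longleftrightarrow>
    distinct xs \<and> set xs = {1..n} \<and> avoids xs [2,4,1,3] \<and> avoids xs [3,1,4,2]"
  by (auto simp: sep_perms_def permutations_of_set_def)

lemma length_sep_perms: "xs \<in> sep_perms n \<Longrightarrow> length xs = n"
  unfolding sep_perms_iff by (metis card_atLeastAtMost diff_Suc_1 distinct_card)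

lemma finite_sep_perms: "finite (sep_perms n)"
  by (rule finite_subset[OF _ finite_permutations_of_set]) (auto simp: sep_perms_def)

lemma sep_perms_0: "sep_perms 0 = {[]}"
  by (auto simp: sep_perms_iff avoids_if_length_less)

lemma sep_perms_1: "sep_perms 1 = {[1]}"
proof -
  have "xs = [1]" if xs: "xs \<in> sep_perms 1" for xs
  proof -
    obtain x where "xs = [x]"
      using length_sep_perms[OF xs] by (metis One_nat_def length_0_conv length_Suc_conv)
    with xs show ?thesis
      by (simp add: sep_perms_iff)
  qed
  moreover have "[1] \<in> sep_perms 1"
    by (simp add: sep_perms_iff avoids_if_length_less)
  ultimately show ?thesis
    by blast
qed

lemma rev_in_sep_perms_iff: "rev xs \<in> sep_perms n \<longleftrightarrow> xs \<in> sep_perms n"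
  by (auto simp: sep_perms_iff avoids_def contains_pattern_rev)

lemma set_drop_eq_diff_set_take:
  assumes "distinct xs"
  shows "set (drop k xs) = set xs - set (take k xs)"
proof -
  have "set xs = set (take k xs) \<union> set (drop k xs)" "set (take k xs) \<inter> set (drop k xs) = {}"
    using assms distinct_append[of "take k xs" "drop k xs"] set_append[of "take k xs" "drop k xs"]
    by simp_all
  then show ?thesis
    by blast
qed

definition direct_sum :: "nat list \<Rightarrow> nat list \<Rightarrow> nat list" where
  "direct_sum \<alpha> \<tau> = \<alpha> @ map (\<lambda>v. v + length \<alpha>) \<tau>"

lemma direct_sum_in_sep_perms:
  assumes \<alpha>: "\<alpha> \<in> sep_perms i" and \<tau>: "\<tau> \<in> sep_perms j"
  shows "direct_sum \<alpha> \<tau> \<in> sep_perms (i + j)"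
proof -
  let ?\<tau> = "map (\<lambda>v. v + i) \<tau>"
  have shift: "strict_mono (\<lambda>v::nat. v + i)"
    by (simp add: strict_mono_def)
  have set_shift: "set ?\<tau> = {i + 1..i + j}"
    using \<tau> by (simp add: sep_perms_iff add.commute)
  have "avoids (\<alpha> @ ?\<tau>) p" if p: "p = [2,4,1,3] \<or> p = [3,1,4,2]" for p
  proof (rule avoids_append_less)
    show "avoids \<alpha> p"
      using \<alpha> p by (auto simp: sep_perms_iff)
    show "avoids ?\<tau> p"
      using \<tau> p by (auto simp: sep_perms_iff avoids_def contains_pattern_map_strict_mono[OF shift])
    show "\<forall>x\<in>set \<alpha>. \<forall>y\<in>set ?\<tau>. x < y"
      using \<alpha> set_shift by (auto simp: sep_perms_iff)
  qed (rule sep_patterns_sum_indecomposable[OF p])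
  moreover have "distinct (\<alpha> @ ?\<tau>)"
    using \<alpha> \<tau> set_shift by (auto simp: sep_perms_iff distinct_map)
  moreover have "set (\<alpha> @ ?\<tau>) = {1..i + j}"
    using \<alpha> set_shift by (auto simp: sep_perms_iff)
  ultimately show ?thesis
    using length_sep_perms[OF \<alpha>] by (simp add: direct_sum_def sep_perms_iff)
qed

lemma sep_perms_split_direct_sum:
  assumes \<sigma>: "\<sigma> \<in> sep_perms n" and prefix: "set (take k \<sigma>) = {1..k}"
  obtains \<tau> where "take k \<sigma> \<in> sep_perms k" "\<tau> \<in> sep_perms (n - k)" "\<sigma> = direct_sum (take k \<sigma>) \<tau>"
proof -
  have d: "distinct \<sigma>" "set \<sigma> = {1..n}"
    using \<sigma> by (auto simp: sep_perms_iff)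
  have av: "avoids (take k \<sigma> @ drop k \<sigma>) p" if "p = [2,4,1,3] \<or> p = [3,1,4,2]" for p
    using \<sigma> that by (auto simp: sep_perms_iff)
  have len_take: "length (take k \<sigma>) = k"
    using prefix distinct_card[of "take k \<sigma>"] d(1) by simp
  have set_drop: "set (drop k \<sigma>) = {k + 1..n}"
    using set_drop_eq_diff_set_take[OF d(1), of k] d(2) prefix by auto
  define \<tau> where "\<tau> = map (\<lambda>v. v - k) (drop k \<sigma>)"
  have shift_back: "map (\<lambda>v. v + k) \<tau> = drop k \<sigma>"
    using set_drop by (auto simp: \<tau>_def intro!: map_idI)
  have shift: "strict_mono (\<lambda>v::nat. v + k)"
    by (simp add: strict_mono_def)
  have "k \<le> n"
    using len_take length_sep_perms[OF \<sigma>] by simp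
  then have "(\<lambda>v. v + k) ` set \<tau> = (\<lambda>v. v + k) ` {1..n - k}"
    using set_drop arg_cong[OF shift_back, of set] by simp
  then have "set \<tau> = {1..n - k}"
    by (rule inj_image_eq_iff[OF strict_mono_imp_inj_on[OF shift], THEN iffD1])
  moreover have "distinct \<tau>"
    using d(1) shift_back distinct_drop[of \<sigma> k] by (metis distinct_map)
  moreover have "avoids \<tau> p" if "p = [2,4,1,3] \<or> p = [3,1,4,2]" for p
    using avoids_appendD(2)[OF av[OF that]] contains_pattern_map_strict_mono[OF shift, of \<tau> p]
    unfolding shift_back avoids_def by simp
  ultimately have "\<tau> \<in> sep_perms (n - k)"
    by (simp add: sep_perms_iff)
  moreover have "take k \<sigma> \<in> sep_perms k"
    using d(1) prefix avoids_appendD(1)[OF av] by (simp add: sep_perms_iff)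
  moreover have "\<sigma> = direct_sum (take k \<sigma>) \<tau>"
    unfolding direct_sum_def len_take shift_back by simp
  ultimately show thesis
    using that by blast
qed

section \<open>Sum and skew decomposability\<close>

definition sum_decomposable :: "nat list \<Rightarrow> bool" where
  "sum_decomposable \<sigma> \<longleftrightarrow> (\<exists>k. 0 < k \<and> k < length \<sigma> \<and> set (take k \<sigma>) = {1..k})"

definition skew_decomposable :: "nat list \<Rightarrow> bool" where
  "skew_decomposable \<sigma> \<longleftrightarrow> (\<exists>k. 0 < k \<and> k < length \<sigma> \<and> set (drop k \<sigma>) = {1..length \<sigma> - k})"

lemma sum_decomposable_rev: "sum_decomposable (rev \<sigma>) \<longleftrightarrow> skew_decomposable \<sigma>"
proof
  assume "sum_decomposable (rev \<sigma>)"
  then obtain k where k: "0 < k" "k < length \<sigma>" "set (drop (length \<sigma> - k) \<sigma>) = {1..k}"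
    by (auto simp: sum_decomposable_def take_rev)
  then show "skew_decomposable \<sigma>"
    unfolding skew_decomposable_def by (intro exI[of _ "length \<sigma> - k"]) auto
next
  assume "skew_decomposable \<sigma>"
  then obtain k where k: "0 < k" "k < length \<sigma>" "set (drop k \<sigma>) = {1..length \<sigma> - k}"
    by (auto simp: skew_decomposable_def)
  then show "sum_decomposable (rev \<sigma>)"
    unfolding sum_decomposable_def by (intro exI[of _ "length \<sigma> - k"]) (auto simp: take_rev)
qed

lemma sep_perms_not_sum_and_skew_decomposable:
  assumes "\<sigma> \<in> sep_perms n" "sum_decomposable \<sigma>" "skew_decomposable \<sigma>"
  shows False
proof -
  have d: "distinct \<sigma>" "set \<sigma> = {1..n}" "length \<sigma> = n"
    using assms(1) length_sep_perms by (auto simp: sep_perms_iff)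
  obtain k where k: "0 < k" "k < n" "set (take k \<sigma>) = {1..k}"
    using assms(2) d(3) unfolding sum_decomposable_def by blast
  obtain j where j: "0 < j" "j < n" "set (drop j \<sigma>) = {1..n - j}"
    using assms(3) d(3) unfolding skew_decomposable_def by blast
  have disj: "set (take i \<sigma>) \<inter> set (drop i \<sigma>) = {}" for i
    using set_take_disj_set_drop_if_distinct[OF d(1), of i i] by simp
  have split: "set (take i \<sigma>) \<union> set (drop i \<sigma>) = {1..n}" for i
    using d(2) append_take_drop_id[of i \<sigma>] set_append[of "take i \<sigma>" "drop i \<sigma>"] by simp
  show False
  proof (cases "k \<le> j")
    case True
    then have "1 \<in> set (drop k \<sigma>)"
      using j set_drop_subset_set_drop[OF True, of \<sigma>] by auto
    then show False
      using disj[of k] k by auto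
  next
    case False
    then have "n \<in> set (take k \<sigma>)"
      using j split[of j] set_take_subset_set_take[of j k \<sigma>] by auto
    then show False
      using k by auto
  qed
qed

lemma downward_closed_eq_atLeastAtMost_card:
  fixes S :: "nat set"
  assumes "finite S" "0 \<notin> S" and closed: "\<And>x y. x \<in> S \<Longrightarrow> 0 < y \<Longrightarrow> y < x \<Longrightarrow> y \<in> S"
  shows "S = {1..card S}"
proof (cases "S = {}")
  case False
  have "S = {1..Max S}"
  proof (intro equalityI subsetI)
    show "x \<in> {1..Max S}" if "x \<in> S" for x
      using that assms(1,2) by (auto simp: Suc_le_eq intro: Nat.gr0I)
    show "x \<in> S" if "x \<in> {1..Max S}" for x
      using that closed[of "Max S" x] Max_in[OF assms(1) False] by (cases "x = Max S") auto
  qed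
  then show ?thesis
    by (metis card_atLeastAtMost diff_Suc_1)
qed simp

lemma sep_perms_delete_max:
  assumes \<sigma>: "ys @ Suc n # zs \<in> sep_perms (Suc n)"
  shows "ys @ zs \<in> sep_perms n"
proof -
  have d: "distinct (ys @ Suc n # zs)" "set (ys @ Suc n # zs) = {1..Suc n}"
    using \<sigma> by (simp_all add: sep_perms_iff)
  then have "set (ys @ zs) = {1..Suc n} - {Suc n}"
    by auto
  also have "\<dots> = {1..n}"
    by auto
  finally have "set (ys @ zs) = {1..n}" .
  moreover have "distinct (ys @ zs)"
    using d(1) by simp
  moreover have "avoids (ys @ zs) p" if "avoids (ys @ Suc n # zs) p" for p
    using that contains_pattern_insertI unfolding avoids_def by blast
  ultimately show ?thesis
    using \<sigma> by (simp add: sep_perms_iff)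
qed

lemma sum_decomposable_append_max:
  assumes "xs @ [Suc n] \<in> sep_perms (Suc n)" "0 < n"
  shows "sum_decomposable (xs @ [Suc n])"
proof -
  have "set xs = {1..n}"
    using sep_perms_delete_max[of xs n "[]"] assms(1) by (simp add: sep_perms_iff)
  moreover have "length xs = n"
    using length_sep_perms[OF assms(1)] by simp
  ultimately show ?thesis
    unfolding sum_decomposable_def using assms(2) by (intro exI[of _ n]) simp
qed

text \<open>If a > b, then a, the maximum, b and the entry following the prefix (which exceeds
  k \<ge> a) form the pattern 2413.\<close>

lemma sep_perms_insert_max_prefix_below:
  assumes \<sigma>: "ys @ Suc n # zs \<in> sep_perms (Suc n)"
    and k: "length ys < k" "k < n" "set (take k (ys @ zs)) = {1..k}"
    and a: "a \<in> set ys" and b: "b \<in> set (take (k - length ys) zs)"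
  shows "a < b"
proof (rule ccontr)
  let ?\<sigma> = "ys @ Suc n # zs" and ?s = "ys @ zs" and ?m = "length ys"
  have s: "?s \<in> sep_perms n"
    by (rule sep_perms_delete_max[OF \<sigma>])
  have d: "distinct ?s" "set ?s = {1..n}" "length ?s = n"
    using s length_sep_perms[OF s] by (simp_all add: sep_perms_iff)
  assume "\<not> a < b"
  moreover have "a \<noteq> b"
    using d(1) a b by (auto dest: in_set_takeD)
  ultimately have "b < a"
    by simp
  obtain i where i: "i < ?m" "ys ! i = a"
    using a by (meson in_set_conv_nth)
  obtain j where j: "j < k - ?m" "zs ! j = b"
    using b by (auto simp: in_set_conv_nth)
  define c where "c = zs ! (k - ?m)"
  have "c = drop k ?s ! 0"
    using k(1,2) d(3) by (simp add: c_def)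
  moreover have "drop k ?s \<noteq> []"
    using k(2) d(3) by (metis drop_eq_Nil not_le)
  ultimately have "c \<in> set (drop k ?s)"
    by (metis length_greater_0_conv nth_mem)
  moreover have "set (drop k ?s) = {1..n} - {1..k}"
    using set_drop_eq_diff_set_take[OF d(1), of k] unfolding d(2) k(3) .
  ultimately have "c \<in> {1..n} - {1..k}"
    by blast
  moreover have "a \<in> set (take k ?s)"
    using a k(1) by simp
  then have "a \<le> k"
    unfolding k(3) by simp
  ultimately have "a < c" "c < Suc n"
    by auto
  have "contains_pattern ?\<sigma> [2,4,1,3]"
  proof (rule contains_pattern_2413I[of i ?m "Suc ?m + j" "Suc ?m + (k - ?m)"])
    show "Suc ?m + (k - ?m) < length ?\<sigma>"
      using k(1,2) d(3) by simp
    show "?\<sigma> ! (Suc ?m + j) < ?\<sigma> ! i" "?\<sigma> ! i < ?\<sigma> ! (Suc ?m + (k - ?m))"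
      "?\<sigma> ! (Suc ?m + (k - ?m)) < ?\<sigma> ! ?m"
      using k(1) i j \<open>b < a\<close> \<open>a < c\<close> \<open>c < Suc n\<close> by (simp_all add: nth_append c_def)
  qed (use i j in auto)
  then show False
    using \<sigma> by (simp add: sep_perms_iff avoids_def)
qed

lemma sum_decomposable_insert_max:
  assumes \<sigma>: "ys @ Suc n # zs \<in> sep_perms (Suc n)" and "ys \<noteq> []"
    and sum: "sum_decomposable (ys @ zs)"
  shows "sum_decomposable (ys @ Suc n # zs)"
proof -
  let ?\<sigma> = "ys @ Suc n # zs" and ?s = "ys @ zs" and ?m = "length ys"
  have s: "?s \<in> sep_perms n"
    by (rule sep_perms_delete_max[OF \<sigma>])
  have d: "distinct ?s" "length ?s = n"
    using s length_sep_perms[OF s] by (simp_all add: sep_perms_iff)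
  obtain k where k: "0 < k" "k < n" "set (take k ?s) = {1..k}"
    using sum d(2) unfolding sum_decomposable_def by blast
  show ?thesis
  proof (cases "k \<le> ?m")
    case True
    then have "take k ?\<sigma> = take k ?s"
      by simp
    then show ?thesis
      unfolding sum_decomposable_def using k d(2) by (intro exI[of _ k]) simp
  next
    case False
    let ?A = "take (k - ?m) zs"
    have ys_A: "set ys \<union> set ?A = {1..k}"
      using k(3) False by simp
    have ys_below: "set ys \<subseteq> {1..k}"
      using ys_A by blast
    have "set ys = {1..card (set ys)}"
    proof (rule downward_closed_eq_atLeastAtMost_card)
      show "0 \<notin> set ys"
        using ys_below by auto
      show "y \<in> set ys" if "x \<in> set ys" "0 < y" "y < x" for x y
      proof -
        have "y \<in> set ys \<union> set ?A"
          using that ys_below unfolding ys_A by auto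
        then show ?thesis
          using sep_perms_insert_max_prefix_below[OF \<sigma> _ k(2,3) that(1), of y] False that(3) by auto
      qed
    qed simp
    then have "set (take ?m ?\<sigma>) = {1..?m}"
      using d(1) by (simp add: distinct_card)
    then show ?thesis
      unfolding sum_decomposable_def using \<open>ys \<noteq> []\<close> k(2) d(2) by (intro exI[of _ ?m]) simp
  qed
qed

text \<open>Induction by deleting the maximum; the cases where it is the first entry or where the
  rest is skew decomposable are mirrored to the sum case by reversal.\<close>

theorem sep_perms_sum_or_skew_decomposable:
  assumes "\<sigma> \<in> sep_perms n" "2 \<le> n"
  shows "sum_decomposable \<sigma> \<or> skew_decomposable \<sigma>"
  using assms
proof (induction n arbitrary: \<sigma>)
  case (Suc n)
  have "Suc n \<in> set \<sigma>"
    using Suc.prems(1) by (simp add: sep_perms_iff)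
  then obtain ys zs where \<sigma>: "\<sigma> = ys @ Suc n # zs"
    by (meson split_list)
  have rev_\<sigma>: "rev \<sigma> = rev zs @ Suc n # rev ys"
    using \<sigma> by simp
  have rev_sep: "rev zs @ Suc n # rev ys \<in> sep_perms (Suc n)"
    using Suc.prems(1) rev_\<sigma> by (metis rev_in_sep_perms_iff)
  consider "zs = []" | "ys = []" | "ys \<noteq> []" "zs \<noteq> []"
    by blast
  then show ?case
  proof cases
    case 1
    then show ?thesis
      using sum_decomposable_append_max[of ys n] Suc.prems \<sigma> by simp
  next
    case 2
    then have "sum_decomposable (rev \<sigma>)"
      using sum_decomposable_append_max[of "rev zs" n] Suc.prems(2) rev_\<sigma> rev_sep 2 by simp
    then show ?thesis
      by (simp add: sum_decomposable_rev)
  next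
    case 3
    have s: "ys @ zs \<in> sep_perms n"
      using sep_perms_delete_max Suc.prems(1) \<sigma> by simp
    have "2 \<le> n"
      using length_sep_perms[OF s] 3 by (cases ys; cases zs) auto
    from Suc.IH[OF s this] show ?thesis
    proof
      assume "sum_decomposable (ys @ zs)"
      then show ?thesis
        using sum_decomposable_insert_max[of ys n zs] Suc.prems(1) \<sigma> 3 by simp
    next
      assume "skew_decomposable (ys @ zs)"
      then have "sum_decomposable (rev zs @ rev ys)"
        by (simp flip: sum_decomposable_rev)
      then have "sum_decomposable (rev \<sigma>)"
        using sum_decomposable_insert_max[OF rev_sep] rev_\<sigma> 3 by simp
      then show ?thesis
        by (simp add: sum_decomposable_rev)
    qed
  qed
qed simp

section \<open>Counting by the position of 1\<close>

definition sum_indecomposable_at :: "nat \<Rightarrow> nat \<Rightarrow> nat list set" where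
  "sum_indecomposable_at n l = {\<sigma> \<in> sep_perms_at n l. \<not> sum_decomposable \<sigma>}"

definition skew_indecomposable_at :: "nat \<Rightarrow> nat \<Rightarrow> nat list set" where
  "skew_indecomposable_at n l = {\<sigma> \<in> sep_perms_at n l. \<not> skew_decomposable \<sigma>}"

lemma finite_sep_perms_at: "finite (sep_perms_at n l)"
  using finite_sep_perms[of n] by (simp add: sep_perms_at_def)

lemma nth_direct_sum_left: "j < length \<alpha> \<Longrightarrow> direct_sum \<alpha> \<tau> ! j = \<alpha> ! j"
  by (simp add: direct_sum_def nth_append)

lemma sum_decomposable_if_proper_prefix:
  assumes "\<beta> \<in> sep_perms j" "0 < j" "j < length \<gamma>" "take j \<gamma> = \<beta>"
  shows "sum_decomposable \<gamma>"
  unfolding sum_decomposable_def using assms by (intro exI[of _ j]) (simp add: sep_perms_iff)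

lemma direct_sum_sum_indecomposable_inject:
  assumes "\<alpha> \<in> sep_perms i" "\<alpha>' \<in> sep_perms i'" "0 < i" "0 < i'"
    and "\<not> sum_decomposable \<alpha>" "\<not> sum_decomposable \<alpha>'"
    and eq: "direct_sum \<alpha> \<tau> = direct_sum \<alpha>' \<tau>'"
  shows "\<alpha> = \<alpha>' \<and> \<tau> = \<tau>'"
proof -
  have len: "length \<alpha> = i" "length \<alpha>' = i'"
    using assms(1,2) by (simp_all add: length_sep_perms)
  have "\<not> i < i'"
  proof
    assume "i < i'"
    then have "take i \<alpha>' = \<alpha>"
      using arg_cong[OF eq, of "take i"] len by (simp add: direct_sum_def)
    then show False
      using sum_decomposable_if_proper_prefix[OF assms(1,3)] \<open>i < i'\<close> len assms(6) by simp
  qed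
  moreover have "\<not> i' < i"
  proof
    assume "i' < i"
    then have "take i' \<alpha> = \<alpha>'"
      using arg_cong[OF eq, of "take i'"] len by (simp add: direct_sum_def)
    then show False
      using sum_decomposable_if_proper_prefix[OF assms(2,4)] \<open>i' < i\<close> len assms(5) by simp
  qed
  ultimately have "length \<alpha> = length \<alpha>'"
    using len by simp
  then show ?thesis
    using eq by (simp add: direct_sum_def)
qed

lemma sep_perms_first_component:
  assumes \<sigma>: "\<sigma> \<in> sep_perms n" and "0 < n"
  obtains i \<alpha> \<tau> where "0 < i" "\<alpha> \<in> sep_perms i" "\<not> sum_decomposable \<alpha>"
    "\<tau> \<in> sep_perms (n - i)" "\<sigma> = direct_sum \<alpha> \<tau>"
proof -
  let ?P = "\<lambda>k. 0 < k \<and> set (take k \<sigma>) = {1..k}"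
  define i where "i = (LEAST k. ?P k)"
  have "?P n"
    using \<sigma> \<open>0 < n\<close> length_sep_perms[OF \<sigma>] by (simp add: sep_perms_iff)
  then have i: "0 < i" "set (take i \<sigma>) = {1..i}"
    unfolding i_def by (metis (mono_tags, lifting) LeastI)+
  have minimal: "\<not> ?P k" if "k < i" for k
    using that unfolding i_def by (rule not_less_Least)
  obtain \<tau> where \<tau>: "take i \<sigma> \<in> sep_perms i" "\<tau> \<in> sep_perms (n - i)" "\<sigma> = direct_sum (take i \<sigma>) \<tau>"
    using sep_perms_split_direct_sum[OF \<sigma> i(2)] by blast
  have "\<not> sum_decomposable (take i \<sigma>)"
  proof
    assume "sum_decomposable (take i \<sigma>)"
    then obtain k where "0 < k" "k < i" "set (take k \<sigma>) = {1..k}"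
      unfolding sum_decomposable_def by (auto simp: min_def split: if_splits)
    then show False
      using minimal by blast
  qed
  then show thesis
    using that i(1) \<tau> by blast
qed

lemma direct_sum_in_sep_perms_at:
  assumes "\<alpha> \<in> sep_perms_at i l" "1 \<le> l" "l \<le> i" "\<tau> \<in> sep_perms j"
  shows "direct_sum \<alpha> \<tau> \<in> sep_perms_at (i + j) l"
proof -
  have "length \<alpha> = i"
    using assms(1) by (simp add: sep_perms_at_def length_sep_perms)
  then show ?thesis
    using assms direct_sum_in_sep_perms[of \<alpha> i \<tau> j]
    by (simp add: sep_perms_at_def nth_direct_sum_left)
qed

lemma sep_perms_at_first_component:
  assumes \<sigma>: "\<sigma> \<in> sep_perms_at n l" and "1 \<le> l" "l \<le> n"
  obtains i \<alpha> \<tau> where "l \<le> i" "i \<le> n" "\<alpha> \<in> sum_indecomposable_at i l"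
    "\<tau> \<in> sep_perms (n - i)" "\<sigma> = direct_sum \<alpha> \<tau>"
proof -
  have \<sigma>_sep: "\<sigma> \<in> sep_perms n" and one: "\<sigma> ! (l - 1) = 1"
    using \<sigma> by (simp_all add: sep_perms_at_def)
  obtain i \<alpha> \<tau> where i: "0 < i" "\<alpha> \<in> sep_perms i" "\<not> sum_decomposable \<alpha>"
      "\<tau> \<in> sep_perms (n - i)" "\<sigma> = direct_sum \<alpha> \<tau>"
    using sep_perms_first_component[OF \<sigma>_sep] assms(2,3) by auto
  have len: "length \<alpha> = i" "length \<sigma> = n"
    using i(2) \<sigma>_sep by (simp_all add: length_sep_perms)
  then have "i \<le> n"
    using i(5) by (simp add: direct_sum_def)
  have "1 \<in> set \<alpha>"
    using i(1,2) by (simp add: sep_perms_iff)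
  then obtain j where j: "j < i" "\<alpha> ! j = 1"
    using len(1) by (auto simp: in_set_conv_nth)
  have "\<sigma> ! j = \<sigma> ! (l - 1)"
    using j one len(1) i(5) by (simp add: nth_direct_sum_left)
  then have "j = l - 1"
    using \<sigma>_sep len(2) j(1) \<open>i \<le> n\<close> assms(2,3) by (simp add: sep_perms_iff nth_eq_iff_index_eq)
  then have "\<alpha> \<in> sum_indecomposable_at i l" "l \<le> i"
    using i(2,3) j assms(2) by (auto simp: sum_indecomposable_at_def sep_perms_at_def)
  then show thesis
    using that \<open>i \<le> n\<close> i(4,5) by blast
qed

lemma bij_betw_direct_sum_sep_perms_at:
  assumes "1 \<le> l" "l \<le> n"
  shows "bij_betw (\<lambda>(i, \<alpha>, \<tau>). direct_sum \<alpha> \<tau>)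
    (SIGMA i:{l..n}. sum_indecomposable_at i l \<times> sep_perms (n - i)) (sep_perms_at n l)"
    (is "bij_betw ?F ?D _")
proof -
  define D where "D = ?D"
  define F where "F = ?F"
  have mem_D: "(i, \<alpha>, \<tau>) \<in> D \<longleftrightarrow> l \<le> i \<and> i \<le> n \<and> \<alpha> \<in> sep_perms_at i l \<and>
      \<not> sum_decomposable \<alpha> \<and> \<tau> \<in> sep_perms (n - i)" for i \<alpha> \<tau>
    by (auto simp: D_def sum_indecomposable_at_def)
  have "inj_on F D"
  proof (rule inj_onI)
    fix x y assume "x \<in> D" "y \<in> D" "F x = F y"
    moreover obtain i \<alpha> \<tau> i' \<alpha>' \<tau>' where x: "x = (i, \<alpha>, \<tau>)" and y: "y = (i', \<alpha>', \<tau>')"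
      by (metis prod_cases3)
    ultimately have "\<alpha> = \<alpha>' \<and> \<tau> = \<tau>'" "length \<alpha> = i" "length \<alpha>' = i'"
      using direct_sum_sum_indecomposable_inject[of \<alpha> i \<alpha>' i' \<tau> \<tau>'] assms(1)
      by (auto simp: mem_D F_def sep_perms_at_def length_sep_perms)
    then show "x = y"
      using x y by simp
  qed
  moreover have "F ` D = sep_perms_at n l"
  proof (intro equalityI subsetI)
    fix \<sigma> assume "\<sigma> \<in> F ` D"
    then obtain i \<alpha> \<tau> where "(i, \<alpha>, \<tau>) \<in> D" "\<sigma> = direct_sum \<alpha> \<tau>"
      by (auto simp: F_def)
    then show "\<sigma> \<in> sep_perms_at n l"
      using direct_sum_in_sep_perms_at[of \<alpha> i l \<tau> "n - i"] assms(1) by (simp add: mem_D)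
  next
    fix \<sigma> assume "\<sigma> \<in> sep_perms_at n l"
    then obtain i \<alpha> \<tau> where "l \<le> i" "i \<le> n" "\<alpha> \<in> sum_indecomposable_at i l"
        "\<tau> \<in> sep_perms (n - i)" "\<sigma> = direct_sum \<alpha> \<tau>"
      using sep_perms_at_first_component assms by blast
    then show "\<sigma> \<in> F ` D"
      by (intro image_eqI[of _ _ "(i, \<alpha>, \<tau>)"]) (simp_all add: F_def mem_D sum_indecomposable_at_def)
  qed
  ultimately show ?thesis
    unfolding D_def F_def bij_betw_def by blast
qed

lemma card_sep_perms_at_sum_decomposition:
  assumes "1 \<le> l" "l \<le> n"
  shows "card (sep_perms_at n l) =
    (\<Sum>i=l..n. card (sum_indecomposable_at i l) * card (sep_perms (n - i)))"
proof -
  have "card (sep_perms_at n l) =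
      card (SIGMA i:{l..n}. sum_indecomposable_at i l \<times> sep_perms (n - i))"
    using bij_betw_same_card[OF bij_betw_direct_sum_sep_perms_at[OF assms]] by simp
  also have "\<dots> = (\<Sum>i=l..n. card (sum_indecomposable_at i l) * card (sep_perms (n - i)))"
    by (simp add: card_SigmaI finite_sep_perms finite_sep_perms_at sum_indecomposable_at_def
        card_cartesian_product)
  finally show ?thesis .
qed

lemma card_eq_if_rev_mem_iff:
  assumes "\<And>\<sigma>. rev \<sigma> \<in> A \<longleftrightarrow> \<sigma> \<in> B"
  shows "card A = card B"
proof -
  have "bij_betw rev B A"
    by (rule bij_betw_byWitness[where f' = rev]) (simp_all add: image_subset_iff flip: assms)
  then show ?thesis
    by (simp add: bij_betw_same_card)
qed

lemma rev_in_sep_perms_at_iff: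
  assumes "1 \<le> l" "l \<le> n"
  shows "rev \<sigma> \<in> sep_perms_at n l \<longleftrightarrow> \<sigma> \<in> sep_perms_at n (Suc n - l)"
proof -
  have "rev \<sigma> ! (l - 1) = \<sigma> ! (Suc n - l - 1)" if "\<sigma> \<in> sep_perms n"
    using that assms by (simp add: rev_nth length_sep_perms)
  then show ?thesis
    by (auto simp: sep_perms_at_def rev_in_sep_perms_iff)
qed

lemma card_skew_indecomposable_at:
  assumes "1 \<le> l" "l \<le> n"
  shows "card (skew_indecomposable_at n l) = card (sum_indecomposable_at n (Suc n - l))"
  using assms sum_decomposable_rev[of "rev \<sigma>" for \<sigma>]
  by (intro card_eq_if_rev_mem_iff)
     (simp add: skew_indecomposable_at_def sum_indecomposable_at_def rev_in_sep_perms_at_iff)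

lemma card_sep_perms_at_skew_decomposition:
  assumes "1 \<le> l" "l \<le> n"
  shows "card (sep_perms_at n l) =
    (\<Sum>i=Suc n - l..n. card (skew_indecomposable_at i (l - (n - i))) * card (sep_perms (n - i)))"
proof -
  have "card (sep_perms_at n l) = card (sep_perms_at n (Suc n - l))"
    by (rule card_eq_if_rev_mem_iff, rule rev_in_sep_perms_at_iff[OF assms])
  also have "\<dots> =
      (\<Sum>i=Suc n - l..n. card (sum_indecomposable_at i (Suc n - l)) * card (sep_perms (n - i)))"
    by (rule card_sep_perms_at_sum_decomposition) (use assms in auto)
  also have "\<dots> =
      (\<Sum>i=Suc n - l..n. card (skew_indecomposable_at i (l - (n - i))) * card (sep_perms (n - i)))"
  proof (rule sum.cong)
    fix i assume "i \<in> {Suc n - l..n}"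
    then have "1 \<le> l - (n - i)" "l - (n - i) \<le> i" "Suc i - (l - (n - i)) = Suc n - l"
      using assms by auto
    then show "card (sum_indecomposable_at i (Suc n - l)) * card (sep_perms (n - i)) =
        card (skew_indecomposable_at i (l - (n - i))) * card (sep_perms (n - i))"
      by (simp add: card_skew_indecomposable_at)
  qed simp
  finally show ?thesis .
qed

lemma card_sum_plus_skew_indecomposable_at:
  assumes "1 \<le> l" "l \<le> n"
  shows "card (sum_indecomposable_at n l) + card (skew_indecomposable_at n l) =
    card (sep_perms_at n l) + (if n = 1 then 1 else 0)"
proof -
  let ?A = "sep_perms_at n l"
  let ?P = "sum_indecomposable_at n l" and ?Q = "skew_indecomposable_at n l"
  have "card ?P + card ?Q = card (?P \<union> ?Q) + card (?P \<inter> ?Q)"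
    by (rule card_Un_Int)
       (simp_all add: sum_indecomposable_at_def skew_indecomposable_at_def finite_sep_perms_at)
  moreover have "?P \<union> ?Q = ?A"
    using sep_perms_not_sum_and_skew_decomposable
    by (auto simp: sum_indecomposable_at_def skew_indecomposable_at_def sep_perms_at_def)
  moreover have "card (?P \<inter> ?Q) = (if n = 1 then 1 else 0)"
  proof (cases "n = 1")
    case True
    have "l = 1"
      using assms True by simp
    then have "?A = {[1]}"
      unfolding sep_perms_at_def True sep_perms_1 by auto
    moreover have "\<not> sum_decomposable [1]" "\<not> skew_decomposable [1]"
      by (simp_all add: sum_decomposable_def skew_decomposable_def)
    ultimately have "?P \<inter> ?Q = {[1]}"
      by (auto simp: sum_indecomposable_at_def skew_indecomposable_at_def)
    then show ?thesis
      using True by simp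
  next
    case False
    then have "?P \<inter> ?Q = {}"
      using sep_perms_sum_or_skew_decomposable[of _ n] assms
      by (auto simp: sum_indecomposable_at_def skew_indecomposable_at_def sep_perms_at_def)
    then show ?thesis
      using False by simp
  qed
  ultimately show ?thesis
    by simp
qed

section \<open>Generating functions\<close>

definition count_series :: "(nat \<Rightarrow> nat \<Rightarrow> nat list set) \<Rightarrow> rat fps fps" where
  "count_series A =
    Abs_fps (\<lambda>n. Abs_fps (\<lambda>l. if 1 \<le> l \<and> l \<le> n then of_nat (card (A n l)) else 0))"

lemma count_series_nth:
  "count_series A $ n $ l = (if 1 \<le> l \<and> l \<le> n then of_nat (card (A n l)) else 0)"
  by (simp add: count_series_def)

lemma g_sep_eq_count_series: "g_sep = count_series sep_perms_at"
  by (simp add: g_sep_def count_series_def)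

lemma Sx_nth: "Sx $ n = fps_const (of_nat (card (sep_perms n)))"
  by (simp add: Sx_def sep_perms_0)

lemma Sxu_nth: "Sxu $ n = fps_const (of_nat (card (sep_perms n))) * fps_X ^ n"
  by (simp add: Sxu_def sep_perms_0)

lemma fps_mult_const_X_power_nth:
  fixes f :: "'a::comm_ring_1 fps"
  shows "(f * (fps_const c * fps_X ^ k)) $ l = (if k \<le> l then f $ (l - k) * c else 0)"
  by (simp add: mult.assoc[symmetric] fps_X_power_mult_right_nth)

lemma fps_mult_inverse_eq_1:
  fixes f :: "'a::{ring_1,inverse} fps"
  assumes "f $ 0 * inverse (f $ 0) = 1"
  shows "f * inverse f = 1"
  using fps_right_inverse[OF assms] by (simp add: fps_inverse_def)

lemma count_series_sum_indecomposable_mult_Sx: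
  "count_series sum_indecomposable_at * Sx = g_sep"
proof (intro fps_ext)
  fix n l
  let ?a = "\<lambda>i. of_nat (card (sum_indecomposable_at i l)) :: rat"
  let ?s = "\<lambda>i. of_nat (card (sep_perms (n - i))) :: rat"
  have "(count_series sum_indecomposable_at * Sx) $ n $ l =
      (\<Sum>i=0..n. (if 1 \<le> l \<and> l \<le> i then ?a i else 0) * ?s i)"
    unfolding fps_mult_nth[of _ Sx] fps_sum_nth by (simp add: Sx_nth count_series_nth)
  also have "\<dots> = g_sep $ n $ l"
  proof (cases "1 \<le> l \<and> l \<le> n")
    case True
    then have "(\<Sum>i=0..n. (if 1 \<le> l \<and> l \<le> i then ?a i else 0) * ?s i) = (\<Sum>i=l..n. ?a i * ?s i)"
      by (intro sum.mono_neutral_cong_right) auto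
    also have "\<dots> = of_nat (card (sep_perms_at n l))"
      using True by (simp add: card_sep_perms_at_sum_decomposition)
    finally show ?thesis
      using True by (simp add: g_sep_eq_count_series count_series_nth)
  next
    case False
    then show ?thesis
      by (auto simp: g_sep_eq_count_series count_series_nth intro!: sum.neutral)
  qed
  finally show "(count_series sum_indecomposable_at * Sx) $ n $ l = g_sep $ n $ l" .
qed

lemma count_series_skew_indecomposable_mult_Sxu:
  "count_series skew_indecomposable_at * Sxu = g_sep"
proof (intro fps_ext)
  fix n l
  let ?a = "\<lambda>i. of_nat (card (skew_indecomposable_at i (l - (n - i)))) :: rat"
  let ?s = "\<lambda>i. of_nat (card (sep_perms (n - i))) :: rat"
  let ?P = "\<lambda>i. n - i \<le> l \<and> 1 \<le> l - (n - i) \<and> l - (n - i) \<le> i"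
  have "(count_series skew_indecomposable_at * Sxu) $ n $ l =
      (\<Sum>i=0..n. (if ?P i then ?a i else 0) * ?s i)"
    unfolding fps_mult_nth[of _ Sxu] fps_sum_nth
    by (intro sum.cong) (simp_all add: Sxu_nth fps_mult_const_X_power_nth count_series_nth)
  also have "\<dots> = g_sep $ n $ l"
  proof (cases "1 \<le> l \<and> l \<le> n")
    case True
    then have "(\<Sum>i=0..n. (if ?P i then ?a i else 0) * ?s i) = (\<Sum>i=Suc n - l..n. ?a i * ?s i)"
      by (intro sum.mono_neutral_cong_right) auto
    also have "\<dots> = of_nat (card (sep_perms_at n l))"
      using True by (simp add: card_sep_perms_at_skew_decomposition)
    finally show ?thesis
      using True by (simp add: g_sep_eq_count_series count_series_nth)
  next
    case False
    then show ?thesis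
      by (auto simp: g_sep_eq_count_series count_series_nth intro!: sum.neutral)
  qed
  finally show "(count_series skew_indecomposable_at * Sxu) $ n $ l = g_sep $ n $ l" .
qed

lemma count_series_sum_plus_skew_indecomposable:
  "count_series sum_indecomposable_at + count_series skew_indecomposable_at =
    g_sep + fps_X * fps_const fps_X"
proof (intro fps_ext)
  fix n l
  show "(count_series sum_indecomposable_at + count_series skew_indecomposable_at) $ n $ l =
      (g_sep + fps_X * fps_const fps_X) $ n $ l"
  proof (cases "1 \<le> l \<and> l \<le> n")
    case True
    then have "of_nat (card (sum_indecomposable_at n l)) + of_nat (card (skew_indecomposable_at n l))
        = (of_nat (card (sep_perms_at n l)) + (if n = 1 then 1 else 0) :: rat)"
      using card_sum_plus_skew_indecomposable_at[of l n] by (simp flip: of_nat_add)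
    then show ?thesis
      using True by (auto simp: g_sep_eq_count_series count_series_nth)
  qed (auto simp: g_sep_eq_count_series count_series_nth)
qed

theorem proposition2p1:
  shows "g_sep = fps_X * fps_const fps_X * Sx * Sxu * inverse (Sx + Sxu - Sx * Sxu)"
proof -
  let ?D = "Sx + Sxu - Sx * Sxu"
  have "?D $ 0 = 1"
    by (simp add: Sx_nth Sxu_nth sep_perms_0)
  then have inverse_D: "?D * inverse ?D = 1"
    by (intro fps_mult_inverse_eq_1) simp
  have "(g_sep + fps_X * fps_const fps_X) * (Sx * Sxu) =
      (count_series sum_indecomposable_at * Sx) * Sxu +
      (count_series skew_indecomposable_at * Sxu) * Sx"
    unfolding count_series_sum_plus_skew_indecomposable[symmetric] by (simp add: algebra_simps)
  also have "\<dots> = g_sep * Sxu + g_sep * Sx"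
    by (simp only: count_series_sum_indecomposable_mult_Sx
        count_series_skew_indecomposable_mult_Sxu)
  finally have "g_sep * ?D = fps_X * fps_const fps_X * Sx * Sxu"
    by (simp add: algebra_simps)
  then show ?thesis
    by (metis inverse_D mult.assoc mult.right_neutral)
qed

end
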